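(* Let $t_1<t_2$, let $u:[t_1,t_2]\to\mathcal C$ be measurable and $p:[t_1,t_2]\to\mathbb R^3$ absolutely continuous with $\frac{dp}{dt}=p(t)\times u(t)$ and $\mathcal H(p(t),u(t))=\mathcal M(p(t))=0$ for almost all $t$. (a) If $p(t)=S-\kappa Q+z(t)Z$ for all $t\in[t_1,t_2]$, then $z(t)=0$ on $[t_1,t_2]$ and $u(t)=W_+/(1+\kappa c+\kappa+c)$ for almost all $t$. (b) If $\kappa>0$ and $p(t)=S+\kappa Q+z(t)Z$ for all $t\in[t_1,t_2]$, then $\kappa\ge c$, $z(t)=0$ on $[t_1,t_2]$ and $u(t)$ is the positive multiple of $W_-$ lying in $\mathcal C$ for almost all $t$. Analogously, if $p(t)=-S+\kappa Q+z(t)Z$ (resp. $p(t)=-S-\kappa Q+z(t)Z$ with $\kappa>0$) on $[t_1,t_2]$, then $z\equiv0$ and $u(t)$ is the multiple of $-W_+$ (resp. $-W_-$) lying in $\mathcal C$.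
   Context: Fix unit vectors $X,Y\in\mathbb R^3$ with angle $\alpha\in(0,\pi/2]$, $c=\cos\alpha$, and $\kappa\in[0,1]$. Let $Z=X\times Y$, $S=X-cY$, $Q=Y-cX$. Let $\mathcal C=\{aX+bY:|a|+|b|=1\}$, $\mathrm{cost}(aX+bY)=|a|+\kappa|b|$, $\mathcal H(p,u)=-\sin^2(\alpha)\mathrm{cost}(u)+(p,u)$, $\mathcal M(p)=\max_{u\in\mathcal C}\mathcal H(p,u)$. $W_+=(1+\kappa c)X-(\kappa+c)Y$ and $W_-=(1-\kappa c)X+(\kappa-c)Y$. *)

theory Defs
  imports "HOL-Analysis.Analysis" "HOL-Analysis.Cross3"
begin

definition absolutely_continuous_on :: "real set \<Rightarrow> (real \<Rightarrow> 'a::real_normed_vector) \<Rightarrow> bool" where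
  "absolutely_continuous_on S f \<longleftrightarrow>
     (\<forall>e>0. \<exists>d>0. \<forall>D::(real \<times> real) set.
        finite D \<and> (\<forall>(a,b)\<in>D. a \<le> b \<and> {a..b} \<subseteq> S) \<and>
        pairwise (\<lambda>(a,b) (a',b'). {a<..<b} \<inter> {a'<..<b'} = {}) D \<and>
        (\<Sum>(a,b)\<in>D. b - a) < d
        \<longrightarrow> (\<Sum>(a,b)\<in>D. norm (f b - f a)) < e)"

definition ctrlset :: "real^3 \<Rightarrow> real^3 \<Rightarrow> (real^3) set" where
  "ctrlset X Y = {a *\<^sub>R X + b *\<^sub>R Y | a b. \<bar>a\<bar> + \<bar>b\<bar> = 1}"

text \<open>cost(aX+bY) = |a| + kappa |b| (well defined since X, Y are independent).\<close>
definition cost :: "real^3 \<Rightarrow> real^3 \<Rightarrow> real \<Rightarrow> real^3 \<Rightarrow> real" where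
  "cost X Y \<kappa> v = (THE r. \<exists>a b. v = a *\<^sub>R X + b *\<^sub>R Y \<and> r = \<bar>a\<bar> + \<kappa> * \<bar>b\<bar>)"

definition Ham :: "real^3 \<Rightarrow> real^3 \<Rightarrow> real \<Rightarrow> real \<Rightarrow> real^3 \<Rightarrow> real^3 \<Rightarrow> real" where
  "Ham X Y \<alpha> \<kappa> p v = - (sin \<alpha>)\<^sup>2 * cost X Y \<kappa> v + p \<bullet> v"

text \<open>M(p) = max over C of H(p,.) (C is compact, so the supremum is a maximum).\<close>
definition Mfun :: "real^3 \<Rightarrow> real^3 \<Rightarrow> real \<Rightarrow> real \<Rightarrow> real^3 \<Rightarrow> real" where
  "Mfun X Y \<alpha> \<kappa> p = Sup (Ham X Y \<alpha> \<kappa> p ` ctrlset X Y)"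

end

theory Submission
  imports Defs
begin

(* Write Z = X x Y, c = cos alpha, and let p = sigma S + tau Q + z Z.  Then the inner
   products p.X = sigma (1 - c^2) and p.Y = tau (1 - c^2) are constant, so along the
   adjoint equation p' = p x u the derivative p x u is orthogonal to X and to Y.  For a
   control u = aX + bY with |a| + |b| = 1 this forces p.Z = 0 almost everywhere, hence
   everywhere by continuity, i.e. z = 0.  Then p is constant, p x u is also orthogonal
   to Z, and together with H(p,u) = 0 this gives two scalar equations for (a,b), collected
   in the predicate singular_coeffs.  Solving them yields the multiples of W+ and W-. *)

lemma unit_frame:
  fixes X Y :: "real^3"
  assumes X: "norm X = 1" and Y: "norm Y = 1" and XY: "X \<bullet> Y = c"
  shows "X \<bullet> X = 1" "Y \<bullet> Y = 1"
    and "cross3 X Y \<bullet> X = 0" "cross3 X Y \<bullet> Y = 0"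
    and "cross3 X Y \<bullet> cross3 X Y = 1 - c\<^sup>2"
  using assms by (simp_all add: dot_cross_self dot_cross power2_eq_square norm_eq_1 inner_commute[of Y X])

lemma cross_control_inner:
  fixes X Y p :: "real^3"
  assumes X: "norm X = 1" and Y: "norm Y = 1" and XY: "X \<bullet> Y = c"
  shows "cross3 p (a *\<^sub>R X + b *\<^sub>R Y) \<bullet> X = - b * (p \<bullet> cross3 X Y)"
    and "cross3 p (a *\<^sub>R X + b *\<^sub>R Y) \<bullet> Y = a * (p \<bullet> cross3 X Y)"
    and "cross3 p (a *\<^sub>R X + b *\<^sub>R Y) \<bullet> cross3 X Y
           = (b + a * c) * (p \<bullet> X) - (a + b * c) * (p \<bullet> Y)"
  using unit_frame[OF assms]
  by (simp_all add: XY cross_triple[of p] cross_add_left cross_mult_left cross_skew[of Y X] Lagrange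
      inner_commute[of p] inner_commute[of Y X] algebra_simps)

(* The frame components of sigma S + tau Q + zeta Z; the vectors S, Q are the duals of
   X, Y in the plane, scaled by 1 - c^2. *)
lemma frame_coords_inner:
  fixes X Y :: "real^3" and \<sigma> \<tau> \<zeta> :: real
  assumes X: "norm X = 1" and Y: "norm Y = 1" and XY: "X \<bullet> Y = c"
  defines "q \<equiv> \<sigma> *\<^sub>R (X - c *\<^sub>R Y) + \<tau> *\<^sub>R (Y - c *\<^sub>R X) + \<zeta> *\<^sub>R cross3 X Y"
  shows "q \<bullet> X = \<sigma> * (1 - c\<^sup>2)" "q \<bullet> Y = \<tau> * (1 - c\<^sup>2)" "q \<bullet> cross3 X Y = \<zeta> * (1 - c\<^sup>2)"
proof -
  note frame = unit_frame[OF X Y XY]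
  have YX: "Y \<bullet> X = c" and XZ: "X \<bullet> cross3 X Y = 0" and YZ: "Y \<bullet> cross3 X Y = 0"
    using XY frame by (simp_all add: inner_commute)
  show "q \<bullet> X = \<sigma> * (1 - c\<^sup>2)" "q \<bullet> Y = \<tau> * (1 - c\<^sup>2)" "q \<bullet> cross3 X Y = \<zeta> * (1 - c\<^sup>2)"
    unfolding q_def by (simp_all add: frame XY YX XZ YZ inner_diff_left power2_eq_square algebra_simps)
qed

lemma coords_unique:
  fixes X Y :: "real^3"
  assumes X: "norm X = 1" and Y: "norm Y = 1" and XY: "X \<bullet> Y = c" and c: "c\<^sup>2 < 1"
    and eq: "a *\<^sub>R X + b *\<^sub>R Y = a' *\<^sub>R X + b' *\<^sub>R Y"
  shows "a = a'" "b = b'"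
proof -
  have eX: "(a - a') + (b - b') * c = 0" and eY: "(a - a') * c + (b - b') = 0"
    using arg_cong[OF eq, of "\<lambda>v. v \<bullet> X"] arg_cong[OF eq, of "\<lambda>v. v \<bullet> Y"] unit_frame[OF X Y XY]
    by (simp_all add: XY inner_commute[of Y X] algebra_simps)
  have "(a - a') * (1 - c\<^sup>2) = ((a - a') + (b - b') * c) - c * ((a - a') * c + (b - b'))"
   and "(b - b') * (1 - c\<^sup>2) = ((a - a') * c + (b - b')) - c * ((a - a') + (b - b') * c)"
    by (simp_all add: power2_eq_square algebra_simps)
  then have "(a - a') * (1 - c\<^sup>2) = 0" "(b - b') * (1 - c\<^sup>2) = 0"
    by (simp_all only: eX eY)
  then show "a = a'" "b = b'" using c by simp_all
qed

lemma cost_coords: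
  fixes X Y :: "real^3"
  assumes X: "norm X = 1" and Y: "norm Y = 1" and XY: "X \<bullet> Y = c" and c: "c\<^sup>2 < 1"
  shows "cost X Y \<kappa> (a *\<^sub>R X + b *\<^sub>R Y) = \<bar>a\<bar> + \<kappa> * \<bar>b\<bar>"
  unfolding cost_def
proof (rule the_equality)
  show "\<exists>a' b'. a *\<^sub>R X + b *\<^sub>R Y = a' *\<^sub>R X + b' *\<^sub>R Y \<and> \<bar>a\<bar> + \<kappa> * \<bar>b\<bar> = \<bar>a'\<bar> + \<kappa> * \<bar>b'\<bar>"
    by blast
  fix r assume "\<exists>a' b'. a *\<^sub>R X + b *\<^sub>R Y = a' *\<^sub>R X + b' *\<^sub>R Y \<and> r = \<bar>a'\<bar> + \<kappa> * \<bar>b'\<bar>"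
  then obtain a' b' where "a *\<^sub>R X + b *\<^sub>R Y = a' *\<^sub>R X + b' *\<^sub>R Y" "r = \<bar>a'\<bar> + \<kappa> * \<bar>b'\<bar>"
    by blast
  then show "r = \<bar>a\<bar> + \<kappa> * \<bar>b\<bar>" using coords_unique[OF X Y XY c, of a b a' b'] by simp
qed

lemma Ham_coords:
  fixes X Y p :: "real^3"
  assumes X: "norm X = 1" and Y: "norm Y = 1" and XY: "X \<bullet> Y = cos \<alpha>" and c: "(cos \<alpha>)\<^sup>2 < 1"
  shows "Ham X Y \<alpha> \<kappa> p (a *\<^sub>R X + b *\<^sub>R Y)
           = a * (p \<bullet> X) + b * (p \<bullet> Y) - (1 - (cos \<alpha>)\<^sup>2) * (\<bar>a\<bar> + \<kappa> * \<bar>b\<bar>)"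
  unfolding Ham_def cost_coords[OF X Y XY c] sin_squared_eq inner_add_right inner_scaleR_right by linarith


lemma absolutely_continuous_on_imp_continuous_on:
  fixes f :: "real \<Rightarrow> 'a::real_normed_vector"
  assumes "absolutely_continuous_on {t1..t2} f"
  shows "continuous_on {t1..t2} f"
  unfolding continuous_on_iff
proof (intro ballI allI impI)
  fix x e assume x: "x \<in> {t1..t2}" and e: "(0::real) < e"
  obtain d where d: "d > 0" and small: "\<And>D::(real \<times> real) set. finite D \<and>
        (\<forall>(a,b)\<in>D. a \<le> b \<and> {a..b} \<subseteq> {t1..t2}) \<and>
        pairwise (\<lambda>(a,b) (a',b'). {a<..<b} \<inter> {a'<..<b'} = {}) D \<and> (\<Sum>(a,b)\<in>D. b - a) < d
        \<Longrightarrow> (\<Sum>(a,b)\<in>D. norm (f b - f a)) < e"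
    using assms e unfolding absolutely_continuous_on_def by meson
  have "dist (f y) (f x) < e" if y: "y \<in> {t1..t2}" and dy: "dist y x < d" for y
  proof (cases "x \<le> y")
    case True
    then show ?thesis using small[of "{(x,y)}"] x y dy by (auto simp: dist_norm dist_real_def)
  next
    case False
    then show ?thesis using small[of "{(y,x)}"] x y dy
      by (auto simp: dist_norm dist_real_def norm_minus_commute)
  qed
  with d show "\<exists>d>0. \<forall>y\<in>{t1..t2}. dist y x < d \<longrightarrow> dist (f y) (f x) < e" by blast
qed

lemma AE_lebesgue_witness_in_interval:
  fixes l r :: real
  assumes ae: "AE t in lebesgue. P t" and lr: "l < r"
  shows "\<exists>t\<in>{l<..<r}. P t"
proof (rule ccontr)
  assume none: "\<not> (\<exists>t\<in>{l<..<r}. P t)"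
  obtain N where N: "{t. \<not> P t} \<subseteq> N" "N \<in> null_sets lebesgue"
    using ae unfolding eventually_ae_filter by auto
  have "{l<..<r} \<subseteq> N" using none N(1) by auto
  then have "{l<..<r} \<in> null_sets lebesgue" using null_sets_subset[OF N(2), of "{l<..<r}"] by simp
  then have "negligible {l<..<r}" by (simp add: negligible_iff_null_sets)
  moreover have "\<not> negligible {l<..<r}"
    using lr by (metis open_not_negligible open_greaterThanLessThan greaterThanLessThan_empty_iff not_less)
  ultimately show False by blast
qed

lemma continuous_on_AE_zero_imp_zero:
  fixes g :: "real \<Rightarrow> 'a::real_normed_vector"
  assumes t12: "t1 < t2" and cont: "continuous_on {t1..t2} g"
    and ae: "AE t in lebesgue. t \<in> {t1..t2} \<longrightarrow> g t = 0"
  shows "\<forall>t\<in>{t1..t2}. g t = 0"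
proof (rule ccontr)
  assume "\<not> (\<forall>t\<in>{t1..t2}. g t = 0)"
  then obtain t0 where t0: "t0 \<in> {t1..t2}" "g t0 \<noteq> 0" by auto
  then obtain d where d: "d > 0" "\<forall>s\<in>{t1..t2}. dist s t0 < d \<longrightarrow> dist (g s) (g t0) < norm (g t0)"
    using cont unfolding continuous_on_iff by (meson zero_less_norm_iff)
  have "max t1 (t0 - d) < min t2 (t0 + d)" using t0 t12 d by auto
  then obtain t where t: "t \<in> {max t1 (t0 - d)<..<min t2 (t0 + d)}" "t \<in> {t1..t2} \<longrightarrow> g t = 0"
    using AE_lebesgue_witness_in_interval[OF ae] by blast
  then have "t \<in> {t1..t2}" "dist t t0 < d" by (auto simp: dist_real_def)
  then have "dist (g t) (g t0) < norm (g t0)" using d(2) by blast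
  moreover have "g t = 0" using t(2) \<open>t \<in> {t1..t2}\<close> by blast
  ultimately show False by simp
qed

lemma has_vector_derivative_orthogonal_to_const_component:
  fixes p :: "real \<Rightarrow> 'a::real_inner"
  assumes t12: "t1 < t2" and t: "t \<in> {t1..t2}"
    and deriv: "(p has_vector_derivative v) (at t within {t1..t2})"
    and const: "\<forall>s\<in>{t1..t2}. p s \<bullet> w = K"
  shows "v \<bullet> w = 0"
proof -
  have "((\<lambda>s. p s \<bullet> w) has_vector_derivative (v \<bullet> w)) (at t within {t1..t2})"
    using has_derivative_inner_left[OF deriv[unfolded has_vector_derivative_def], of w]
    by (simp add: has_vector_derivative_def)
  then have "((\<lambda>s. K) has_vector_derivative (v \<bullet> w)) (at t within {t1..t2})"
    using has_vector_derivative_transform[OF t, of "\<lambda>s. K" "\<lambda>s. p s \<bullet> w"] const by auto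
  moreover have "((\<lambda>s. K) has_vector_derivative 0) (at t within {t1..t2})" by simp
  ultimately show ?thesis
    using vector_derivative_unique_within_closed_interval[of t1 t2 t, unfolded cbox_interval] t12 t
    by blast
qed

(* The equations for the coordinates (a,b) of a control on a singular arc with
   p = sigma S + tau Q: the control lies in C, H(p,u) = 0 and p x u is orthogonal to Z. *)
definition singular_coeffs :: "real \<Rightarrow> real \<Rightarrow> real \<Rightarrow> real \<Rightarrow> real \<Rightarrow> real \<Rightarrow> bool" where
  "singular_coeffs \<sigma> \<tau> \<kappa> c a b \<longleftrightarrow>
     \<bar>a\<bar> + \<bar>b\<bar> = 1 \<and> \<sigma> * a + \<tau> * b = \<bar>a\<bar> + \<kappa> * \<bar>b\<bar> \<and> \<sigma> * (b + a * c) = \<tau> * (a + b * c)"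

lemma singular_coeffs_neg:
  "singular_coeffs (- \<sigma>) (- \<tau>) \<kappa> c a b \<longleftrightarrow> singular_coeffs \<sigma> \<tau> \<kappa> c (- a) (- b)"
  unfolding singular_coeffs_def by (simp add: algebra_simps)

lemma singular_coeffs_Wp:
  fixes a b c \<kappa> \<sigma> :: real
  defines "D \<equiv> 1 + \<kappa> * c + \<kappa> + c"
  assumes c: "0 \<le> c" and k: "0 \<le> \<kappa>" and sign: "\<sigma> = 1 \<or> \<sigma> = -1"
    and coeffs: "singular_coeffs \<sigma> (- \<sigma> * \<kappa>) \<kappa> c a b"
  shows "a = \<sigma> / D * (1 + \<kappa> * c) \<and> b = - (\<sigma> / D * (\<kappa> + c))"
proof -
  have kc: "0 \<le> \<kappa> * c" using k c by simp
  have D: "D > 0" unfolding D_def using kc k c by linarith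
  have base: "a = (1 + \<kappa> * c) / D \<and> b = - ((\<kappa> + c) / D)"
    if "singular_coeffs 1 (- \<kappa>) \<kappa> c a b" for a b
  proof -
    have ab: "\<bar>a\<bar> + \<bar>b\<bar> = 1" and ham: "a - \<kappa> * b = \<bar>a\<bar> + \<kappa> * \<bar>b\<bar>"
      and cr: "b * (1 + \<kappa> * c) = - a * (\<kappa> + c)"
      using that unfolding singular_coeffs_def by (auto simp: algebra_simps)
    have "- (\<kappa> * b) \<le> \<kappa> * \<bar>b\<bar>" using mult_left_mono[of "- b" "\<bar>b\<bar>" \<kappa>] k by simp
    then have a0: "0 \<le> a" using ham by linarith
    then have "b * (1 + \<kappa> * c) \<le> 0" using cr k c by simp
    then have "b \<le> 0" using kc by (simp add: mult_le_0_iff)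
    then have b: "b = a - 1" using ab a0 by linarith
    have "a * D = 1 + \<kappa> * c + ((a - 1) * (1 + \<kappa> * c) + a * (\<kappa> + c))"
      unfolding D_def by (simp add: algebra_simps)
    also have "\<dots> = 1 + \<kappa> * c" using cr b by simp
    finally have "a * D = 1 + \<kappa> * c" .
    then have "a = (1 + \<kappa> * c) / D" using D by (simp add: field_simps)
    with b D show ?thesis unfolding D_def by (simp add: field_simps)
  qed
  from sign show ?thesis
  proof
    assume "\<sigma> = 1"
    with coeffs base show ?thesis by simp
  next
    assume s: "\<sigma> = -1"
    with coeffs have "singular_coeffs 1 (- \<kappa>) \<kappa> c (- a) (- b)"
      using singular_coeffs_neg[of 1 "- \<kappa>"] by simp
    with base[of "- a" "- b"] s show ?thesis by simp
  qed
qed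

lemma singular_coeffs_Wm:
  fixes a b c \<kappa> \<sigma> :: real
  defines "E \<equiv> (1 + \<kappa>) * (1 - c)"
  assumes c: "0 \<le> c" "c < 1" and k: "0 < \<kappa>" "\<kappa> \<le> 1" and sign: "\<sigma> = 1 \<or> \<sigma> = -1"
    and coeffs: "singular_coeffs \<sigma> (\<sigma> * \<kappa>) \<kappa> c a b"
  shows "c \<le> \<kappa> \<and> a = \<sigma> / E * (1 - \<kappa> * c) \<and> b = \<sigma> / E * (\<kappa> - c)"
proof -
  have E: "E > 0" unfolding E_def using c k by simp
  have kc: "\<kappa> * c < 1" using k c mult_right_mono[of \<kappa> 1 c] by simp
  have base: "c \<le> \<kappa> \<and> a = (1 - \<kappa> * c) / E \<and> b = (\<kappa> - c) / E"
    if "singular_coeffs 1 \<kappa> \<kappa> c a b" for a b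
  proof -
    have ab: "\<bar>a\<bar> + \<bar>b\<bar> = 1" and ham: "a + \<kappa> * b = \<bar>a\<bar> + \<kappa> * \<bar>b\<bar>"
      and cr: "a * (c - \<kappa>) + b * (1 - \<kappa> * c) = 0"
      using that unfolding singular_coeffs_def by (auto simp: algebra_simps)
    have "\<kappa> * b \<le> \<kappa> * \<bar>b\<bar>" using k by (simp add: mult_left_mono)
    then have a0: "0 \<le> a" and "\<kappa> * b = \<kappa> * \<bar>b\<bar>" using ham by linarith+
    then have b0: "0 \<le> b" using k by (metis abs_ge_zero mult_cancel_left order.strict_implies_not_eq)
    have sum: "a + b = 1" using ab a0 b0 by linarith
    have ck: "c \<le> \<kappa>"
    proof (rule ccontr)
      assume "\<not> c \<le> \<kappa>"
      then have "0 \<le> a * (c - \<kappa>)" "0 \<le> b * (1 - \<kappa> * c)" using a0 b0 kc by simp_all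
      then have "a * (c - \<kappa>) = 0" "b * (1 - \<kappa> * c) = 0" using cr by linarith+
      then have "a = 0" "b = 0" using \<open>\<not> c \<le> \<kappa>\<close> kc by auto
      with sum show False by simp
    qed
    have "a * E = 1 - \<kappa> * c - (a * (c - \<kappa>) + (1 - a) * (1 - \<kappa> * c))"
      unfolding E_def by (simp add: algebra_simps)
    also have "\<dots> = 1 - \<kappa> * c" using cr sum by (simp add: eq_diff_eq[symmetric])
    finally have "a * E = 1 - \<kappa> * c" .
    then have "a = (1 - \<kappa> * c) / E" using E by (simp add: field_simps)
    with sum E ck show ?thesis unfolding E_def by (simp add: field_simps)
  qed
  from sign show ?thesis
  proof
    assume "\<sigma> = 1"
    with coeffs base show ?thesis by simp
  next
    assume s: "\<sigma> = -1"
    with coeffs have "singular_coeffs 1 \<kappa> \<kappa> c (- a) (- b)"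
      using singular_coeffs_neg[of 1 \<kappa>] by simp
    with base[of "- a" "- b"] s show ?thesis by simp
  qed
qed

(* The hypotheses of the theorem: an extremal (p,u) of the Pontryagin maximum principle
   on [t1,t2] with vanishing Hamiltonian; only continuity of p is needed. *)
locale pmp_extremal =
  fixes X Y :: "real^3" and \<alpha> \<kappa> t1 t2 :: real and u p :: "real \<Rightarrow> real^3"
  assumes unit_X: "norm X = 1" and unit_Y: "norm Y = 1" and angle: "X \<bullet> Y = cos \<alpha>"
    and alpha_pos: "0 < \<alpha>" and alpha_le: "\<alpha> \<le> pi / 2"
    and kappa_nonneg: "0 \<le> \<kappa>" and kappa_le: "\<kappa> \<le> 1"
    and t12: "t1 < t2"
    and u_C: "\<forall>t\<in>{t1..t2}. u t \<in> ctrlset X Y"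
    and p_cont: "continuous_on {t1..t2} p"
    and p_ode: "AE t in lebesgue. t \<in> {t1..t2} \<longrightarrow>
                  (p has_vector_derivative (cross3 (p t) (u t))) (at t within {t1..t2})"
    and Ham_zero: "AE t in lebesgue. t \<in> {t1..t2} \<longrightarrow> Ham X Y \<alpha> \<kappa> (p t) (u t) = 0"
begin

abbreviation c :: real where "c \<equiv> cos \<alpha>"
abbreviation Z :: "real^3" where "Z \<equiv> cross3 X Y"
abbreviation S :: "real^3" where "S \<equiv> X - c *\<^sub>R Y"
abbreviation Q :: "real^3" where "Q \<equiv> Y - c *\<^sub>R X"
abbreviation Wp :: "real^3" where "Wp \<equiv> (1 + \<kappa> * c) *\<^sub>R X - (\<kappa> + c) *\<^sub>R Y"
abbreviation Wm :: "real^3" where "Wm \<equiv> (1 - \<kappa> * c) *\<^sub>R X + (\<kappa> - c) *\<^sub>R Y"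

(* Since 0 < alpha <= pi/2, the vectors X and Y are not parallel. *)
lemma c_bounds: "0 \<le> c" "c < 1" "c\<^sup>2 < 1"
proof -
  show c0: "0 \<le> c" using alpha_pos alpha_le by (intro cos_ge_zero) auto
  show c1: "c < 1" using alpha_pos alpha_le cos_monotone_0_pi[of 0 \<alpha>] by auto
  have "c * c \<le> c" using c0 c1 by (simp add: mult_left_le)
  with c1 show "c\<^sup>2 < 1" by (simp add: power2_eq_square)
qed

lemma control_coords:
  assumes "t \<in> {t1..t2}"
  obtains a b where "u t = a *\<^sub>R X + b *\<^sub>R Y" "\<bar>a\<bar> + \<bar>b\<bar> = 1"
  using u_C assms unfolding ctrlset_def by blast

lemma normal_component_vanishes:
  assumes pX: "\<forall>t\<in>{t1..t2}. p t \<bullet> X = KX" and pY: "\<forall>t\<in>{t1..t2}. p t \<bullet> Y = KY"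
  shows "\<forall>t\<in>{t1..t2}. p t \<bullet> Z = 0"
proof -
  have "AE t in lebesgue. t \<in> {t1..t2} \<longrightarrow> p t \<bullet> Z = 0"
    using p_ode
  proof eventually_elim
    case (elim t)
    show ?case
    proof
      assume t: "t \<in> {t1..t2}"
      then obtain a b where u: "u t = a *\<^sub>R X + b *\<^sub>R Y" "\<bar>a\<bar> + \<bar>b\<bar> = 1"
        by (rule control_coords)
      note deriv = elim[rule_format, OF t]
      have "cross3 (p t) (u t) \<bullet> X = 0" "cross3 (p t) (u t) \<bullet> Y = 0"
        using has_vector_derivative_orthogonal_to_const_component[OF t12 t deriv] pX pY by blast+
      then have "b * (p t \<bullet> Z) = 0" "a * (p t \<bullet> Z) = 0"
        using cross_control_inner[OF unit_X unit_Y angle, of "p t" a b] u(1) by simp_all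
      with u(2) show "p t \<bullet> Z = 0" by auto
    qed
  qed
  moreover have "continuous_on {t1..t2} (\<lambda>t. p t \<bullet> Z)"
    using p_cont by (intro continuous_intros)
  ultimately show ?thesis using continuous_on_AE_zero_imp_zero[OF t12] by blast
qed

lemma singular_arc:
  assumes arc: "\<forall>t\<in>{t1..t2}. p t = \<sigma> *\<^sub>R S + \<tau> *\<^sub>R Q + z t *\<^sub>R Z"
  shows "\<forall>t\<in>{t1..t2}. z t = 0"
    and "AE t in lebesgue. t \<in> {t1..t2} \<longrightarrow>
           (\<exists>a b. u t = a *\<^sub>R X + b *\<^sub>R Y \<and> singular_coeffs \<sigma> \<tau> \<kappa> c a b)"
proof -
  have e: "0 < 1 - c\<^sup>2" using c_bounds by simp
  have pX: "\<forall>t\<in>{t1..t2}. p t \<bullet> X = \<sigma> * (1 - c\<^sup>2)"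
    and pY: "\<forall>t\<in>{t1..t2}. p t \<bullet> Y = \<tau> * (1 - c\<^sup>2)"
    and pZ: "\<forall>t\<in>{t1..t2}. p t \<bullet> Z = z t * (1 - c\<^sup>2)"
    using arc frame_coords_inner[OF unit_X unit_Y angle] by simp_all
  show z0: "\<forall>t\<in>{t1..t2}. z t = 0"
    using normal_component_vanishes[OF pX pY] pZ e by simp
  then have pZ0: "\<forall>t\<in>{t1..t2}. p t \<bullet> Z = 0" using pZ by simp
  show "AE t in lebesgue. t \<in> {t1..t2} \<longrightarrow>
          (\<exists>a b. u t = a *\<^sub>R X + b *\<^sub>R Y \<and> singular_coeffs \<sigma> \<tau> \<kappa> c a b)"
    using p_ode Ham_zero
  proof eventually_elim
    case (elim t)
    show ?case
    proof
      assume t: "t \<in> {t1..t2}"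
      then obtain a b where u: "u t = a *\<^sub>R X + b *\<^sub>R Y" "\<bar>a\<bar> + \<bar>b\<bar> = 1"
        by (rule control_coords)
      have ptX: "p t \<bullet> X = \<sigma> * (1 - c\<^sup>2)" and ptY: "p t \<bullet> Y = \<tau> * (1 - c\<^sup>2)"
        using pX pY t by blast+
      have "cross3 (p t) (u t) \<bullet> Z = 0"
        using has_vector_derivative_orthogonal_to_const_component[OF t12 t _ pZ0] elim t by blast
      then have "(1 - c\<^sup>2) * (\<sigma> * (b + a * c) - \<tau> * (a + b * c)) = 0"
        using cross_control_inner(3)[OF unit_X unit_Y angle, of "p t" a b] u(1)
        by (simp add: ptX ptY algebra_simps)
      then have switch: "\<sigma> * (b + a * c) = \<tau> * (a + b * c)" using e by simp
      have "Ham X Y \<alpha> \<kappa> (p t) (u t) = 0" using elim t by blast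
      then have "(1 - c\<^sup>2) * (\<sigma> * a + \<tau> * b - (\<bar>a\<bar> + \<kappa> * \<bar>b\<bar>)) = 0"
        using Ham_coords[OF unit_X unit_Y angle c_bounds(3), of \<kappa> "p t" a b] u(1)
        by (simp add: ptX ptY algebra_simps)
      then have "\<sigma> * a + \<tau> * b = \<bar>a\<bar> + \<kappa> * \<bar>b\<bar>" using e by simp
      with u switch show "\<exists>a b. u t = a *\<^sub>R X + b *\<^sub>R Y \<and> singular_coeffs \<sigma> \<tau> \<kappa> c a b"
        unfolding singular_coeffs_def by blast
    qed
  qed
qed

lemma arc_along_Wp:
  assumes sign: "\<sigma> = 1 \<or> \<sigma> = -1"
    and arc: "\<forall>t\<in>{t1..t2}. p t = \<sigma> *\<^sub>R (S - \<kappa> *\<^sub>R Q) + z t *\<^sub>R Z"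
  shows "(\<forall>t\<in>{t1..t2}. z t = 0) \<and>
    (AE t in lebesgue. t \<in> {t1..t2} \<longrightarrow> u t = (\<sigma> / (1 + \<kappa> * c + \<kappa> + c)) *\<^sub>R Wp)"
proof -
  have "\<forall>t\<in>{t1..t2}. p t = \<sigma> *\<^sub>R S + (- \<sigma> * \<kappa>) *\<^sub>R Q + z t *\<^sub>R Z"
    using arc by (simp add: scaleR_diff_right)
  note arc_facts = singular_arc[OF this]
  have "AE t in lebesgue. t \<in> {t1..t2} \<longrightarrow> u t = (\<sigma> / (1 + \<kappa> * c + \<kappa> + c)) *\<^sub>R Wp"
    using arc_facts(2)
  proof eventually_elim
    case (elim t)
    show ?case
    proof
      assume "t \<in> {t1..t2}"
      with elim obtain a b where u: "u t = a *\<^sub>R X + b *\<^sub>R Y"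
        and coeffs: "singular_coeffs \<sigma> (- \<sigma> * \<kappa>) \<kappa> c a b" by blast
      from singular_coeffs_Wp[OF c_bounds(1) kappa_nonneg sign coeffs] u
      show "u t = (\<sigma> / (1 + \<kappa> * c + \<kappa> + c)) *\<^sub>R Wp" by (simp add: scaleR_diff_right)
    qed
  qed
  with arc_facts(1) show ?thesis by blast
qed

(* Part (b) of the theorem and its mirror image p = -(S + kappa Q) + z Z; the inequality
   kappa >= c comes from evaluating the scalar equations at a single time. *)
lemma arc_along_Wm:
  assumes sign: "\<sigma> = 1 \<or> \<sigma> = -1" and kappa_pos: "0 < \<kappa>"
    and arc: "\<forall>t\<in>{t1..t2}. p t = \<sigma> *\<^sub>R (S + \<kappa> *\<^sub>R Q) + z t *\<^sub>R Z"
  shows "c \<le> \<kappa> \<and> (\<forall>t\<in>{t1..t2}. z t = 0) \<and>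
    (AE t in lebesgue. t \<in> {t1..t2} \<longrightarrow> u t = (\<sigma> / ((1 + \<kappa>) * (1 - c))) *\<^sub>R Wm)"
proof -
  have "\<forall>t\<in>{t1..t2}. p t = \<sigma> *\<^sub>R S + (\<sigma> * \<kappa>) *\<^sub>R Q + z t *\<^sub>R Z"
    using arc by (simp add: scaleR_add_right)
  note arc_facts = singular_arc[OF this]
  obtain t where "t \<in> {t1<..<t2}" and
    "t \<in> {t1..t2} \<longrightarrow> (\<exists>a b. u t = a *\<^sub>R X + b *\<^sub>R Y \<and> singular_coeffs \<sigma> (\<sigma> * \<kappa>) \<kappa> c a b)"
    using AE_lebesgue_witness_in_interval[OF arc_facts(2) t12] by blast
  then obtain a b where "singular_coeffs \<sigma> (\<sigma> * \<kappa>) \<kappa> c a b" by auto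
  then have ck: "c \<le> \<kappa>"
    using singular_coeffs_Wm[OF c_bounds(1,2) kappa_pos kappa_le sign] by blast
  have "AE t in lebesgue. t \<in> {t1..t2} \<longrightarrow> u t = (\<sigma> / ((1 + \<kappa>) * (1 - c))) *\<^sub>R Wm"
    using arc_facts(2)
  proof eventually_elim
    case (elim t)
    show ?case
    proof
      assume "t \<in> {t1..t2}"
      with elim obtain a b where u: "u t = a *\<^sub>R X + b *\<^sub>R Y"
        and coeffs: "singular_coeffs \<sigma> (\<sigma> * \<kappa>) \<kappa> c a b" by blast
      from singular_coeffs_Wm[OF c_bounds(1,2) kappa_pos kappa_le sign coeffs] u
      show "u t = (\<sigma> / ((1 + \<kappa>) * (1 - c))) *\<^sub>R Wm" by (simp add: scaleR_add_right)
    qed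
  qed
  with arc_facts(1) ck show ?thesis by blast
qed

end

theorem lemma3p6:
  fixes X Y :: "real^3" and \<alpha> \<kappa> t1 t2 :: real
    and u p :: "real \<Rightarrow> real^3"
  defines "c \<equiv> cos \<alpha>"
  defines "Z \<equiv> cross3 X Y"
  defines "S \<equiv> X - c *\<^sub>R Y"
  defines "Q \<equiv> Y - c *\<^sub>R X"
  defines "Wp \<equiv> (1 + \<kappa> * c) *\<^sub>R X - (\<kappa> + c) *\<^sub>R Y"
  defines "Wm \<equiv> (1 - \<kappa> * c) *\<^sub>R X + (\<kappa> - c) *\<^sub>R Y"
  assumes X: "norm X = 1" and Y: "norm Y = 1"
    and angle: "X \<bullet> Y = cos \<alpha>" and alpha: "0 < \<alpha>" "\<alpha> \<le> pi / 2"
    and kappa: "0 \<le> \<kappa>" "\<kappa> \<le> 1"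
    and t12: "t1 < t2"
    and u_meas: "u \<in> borel_measurable (lebesgue_on {t1..t2})"
    and u_C: "\<forall>t\<in>{t1..t2}. u t \<in> ctrlset X Y"
    and p_ac: "absolutely_continuous_on {t1..t2} p"
    and p_ode: "AE t in lebesgue. t \<in> {t1..t2} \<longrightarrow>
                  (p has_vector_derivative (cross3 (p t) (u t))) (at t within {t1..t2})"
    and pmp: "AE t in lebesgue. t \<in> {t1..t2} \<longrightarrow>
                  Ham X Y \<alpha> \<kappa> (p t) (u t) = Mfun X Y \<alpha> \<kappa> (p t) \<and> Mfun X Y \<alpha> \<kappa> (p t) = 0"
  shows
    "(\<forall>z. (\<forall>t\<in>{t1..t2}. p t = S - \<kappa> *\<^sub>R Q + z t *\<^sub>R Z) \<longrightarrow>
        (\<forall>t\<in>{t1..t2}. z t = 0) \<and>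
        (AE t in lebesgue. t \<in> {t1..t2} \<longrightarrow>
            u t = (1 / (1 + \<kappa> * c + \<kappa> + c)) *\<^sub>R Wp))
   \<and> (\<forall>z. 0 < \<kappa> \<and> (\<forall>t\<in>{t1..t2}. p t = S + \<kappa> *\<^sub>R Q + z t *\<^sub>R Z) \<longrightarrow>
        c \<le> \<kappa> \<and> (\<forall>t\<in>{t1..t2}. z t = 0) \<and>
        (AE t in lebesgue. t \<in> {t1..t2} \<longrightarrow>
            u t \<in> ctrlset X Y \<and> (\<exists>l>0. u t = l *\<^sub>R Wm)))
   \<and> (\<forall>z. (\<forall>t\<in>{t1..t2}. p t = - S + \<kappa> *\<^sub>R Q + z t *\<^sub>R Z) \<longrightarrow>
        (\<forall>t\<in>{t1..t2}. z t = 0) \<and>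
        (AE t in lebesgue. t \<in> {t1..t2} \<longrightarrow>
            u t \<in> ctrlset X Y \<and> (\<exists>l>0. u t = l *\<^sub>R (- Wp))))
   \<and> (\<forall>z. 0 < \<kappa> \<and> (\<forall>t\<in>{t1..t2}. p t = - S - \<kappa> *\<^sub>R Q + z t *\<^sub>R Z) \<longrightarrow>
        (\<forall>t\<in>{t1..t2}. z t = 0) \<and>
        (AE t in lebesgue. t \<in> {t1..t2} \<longrightarrow>
            u t \<in> ctrlset X Y \<and> (\<exists>l>0. u t = l *\<^sub>R (- Wm))))"
proof -
  have "AE t in lebesgue. t \<in> {t1..t2} \<longrightarrow> Ham X Y \<alpha> \<kappa> (p t) (u t) = 0"
    using pmp by eventually_elim auto
  then interpret pmp_extremal X Y \<alpha> \<kappa> t1 t2 u p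
    using X Y angle alpha kappa t12 u_C absolutely_continuous_on_imp_continuous_on[OF p_ac] p_ode
    by unfold_locales
  note Wp_arc = arc_along_Wp[folded c_def, folded Z_def S_def Q_def Wp_def]
  note Wm_arc = arc_along_Wm[folded c_def, folded Z_def S_def Q_def Wm_def]
  have D: "0 < 1 + \<kappa> * c + \<kappa> + c" and E: "0 < (1 + \<kappa>) * (1 - c)"
    using c_bounds kappa unfolding c_def by (simp_all add: add_pos_nonneg)
  have in_C: "AE t in lebesgue. t \<in> {t1..t2} \<longrightarrow> u t \<in> ctrlset X Y \<and> (\<exists>l>0. u t = l *\<^sub>R W)"
    if "AE t in lebesgue. t \<in> {t1..t2} \<longrightarrow> u t = l *\<^sub>R W" "0 < l" for l W
    using that(1) by eventually_elim (use u_C that(2) in blast)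
  have case_Wp: "(\<forall>t\<in>{t1..t2}. z t = 0) \<and>
      (AE t in lebesgue. t \<in> {t1..t2} \<longrightarrow> u t = (1 / (1 + \<kappa> * c + \<kappa> + c)) *\<^sub>R Wp)"
    if "\<forall>t\<in>{t1..t2}. p t = S - \<kappa> *\<^sub>R Q + z t *\<^sub>R Z" for z
    using Wp_arc[of 1 z] that by simp
  have case_Wm: "c \<le> \<kappa> \<and> (\<forall>t\<in>{t1..t2}. z t = 0) \<and>
      (AE t in lebesgue. t \<in> {t1..t2} \<longrightarrow> u t \<in> ctrlset X Y \<and> (\<exists>l>0. u t = l *\<^sub>R Wm))"
    if "0 < \<kappa>" "\<forall>t\<in>{t1..t2}. p t = S + \<kappa> *\<^sub>R Q + z t *\<^sub>R Z" for z
    using Wm_arc[of 1 z] in_C[of "1 / ((1 + \<kappa>) * (1 - c))" Wm] E that by simp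
  have case_minus_Wp: "(\<forall>t\<in>{t1..t2}. z t = 0) \<and>
      (AE t in lebesgue. t \<in> {t1..t2} \<longrightarrow> u t \<in> ctrlset X Y \<and> (\<exists>l>0. u t = l *\<^sub>R (- Wp)))"
    if "\<forall>t\<in>{t1..t2}. p t = - S + \<kappa> *\<^sub>R Q + z t *\<^sub>R Z" for z
    using Wp_arc[of "-1" z] in_C[of "1 / (1 + \<kappa> * c + \<kappa> + c)" "- Wp"] D that by simp
  have case_minus_Wm: "(\<forall>t\<in>{t1..t2}. z t = 0) \<and>
      (AE t in lebesgue. t \<in> {t1..t2} \<longrightarrow> u t \<in> ctrlset X Y \<and> (\<exists>l>0. u t = l *\<^sub>R (- Wm)))"
    if "0 < \<kappa>" "\<forall>t\<in>{t1..t2}. p t = - S - \<kappa> *\<^sub>R Q + z t *\<^sub>R Z" for z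
    using Wm_arc[of "-1" z] in_C[of "1 / ((1 + \<kappa>) * (1 - c))" "- Wm"] E that by simp
  show ?thesis using case_Wp case_Wm case_minus_Wp case_minus_Wm by blast
qed

end
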